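(* Let $d\in\mathbb{N}$, $\eta\in(0,1)$, let $(\Omega,\mathcal{F},\mathbb{P})$ be a probability space, let $Y_k\colon\Omega\to\mathbb{R}^d$, $k\in\mathbb{N}_0$, be non-degenerate i.i.d. random variables with $\mathbb{E}[\|Y_0\|]<\infty$, let $Z\colon\Omega\to\mathbb{R}^d$ be a non-degenerate random variable, assume that $(Y_k)_{k\in\mathbb{N}_0}$ and $Z$ are independent, let $A=\{\sum_{k=1}^\infty\eta(1-\eta)^{k-1}\|Y_k\|<\infty\}$, and let $\chi\colon\Omega\to\mathbb{R}^d$ be a random variable with $\chi(\omega)=\sum_{k=1}^\infty\eta(1-\eta)^{k-1}Y_k(\omega)$ for all $\omega\in A$. Then $$\mathbb{P}\big(\|(1-\eta)\chi+\eta Y_0-Z\|>\|\chi-Z\|\big)>0.$$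
   Context: $\|\cdot\|$ is the Euclidean norm. For a Borel measure $\mu$ on $\mathbb{R}^d$, $\operatorname{supp}(\mu)=\{x\in\mathbb{R}^d\colon\mu(B)>0\text{ for every open }B\ni x\}$. For a random variable $X$, $\operatorname{supp}(X)=\operatorname{supp}(\mathbb{P}_X)$ where $\mathbb{P}_X$ is its law. $X$ is called non-degenerate if the interior of $\operatorname{supp}(X)$ is non-empty. *)

theory Defs
  imports "HOL-Probability.Probability"
begin

definition measure_support :: "'a::topological_space measure \<Rightarrow> 'a set" where
  "measure_support \<mu> = {x. \<forall>B. open B \<and> x \<in> B \<longrightarrow> emeasure \<mu> B > 0}"

definition non_degenerate :: "'b measure \<Rightarrow> ('b \<Rightarrow> 'a::topological_space) \<Rightarrow> bool" where
  "non_degenerate M X \<longleftrightarrow> interior (measure_support (distr M borel X)) \<noteq> {}"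

end

(*
  Choose an interior point y0 of the common support of the Y_k and a support point z0 of Z other
  than y0; pushing y0 slightly away from z0 gives a support point y1 of Y_0 such that the angle
  at y0 in the triangle z0, y0, y1 is obtuse.  By continuity it stays obtuse for all points
  within some distance e of y0, y1, z0, and for such c, y, z the step c + eta (y - c) towards y
  strictly increases the distance to z.  So it suffices that chi, Y_0, Z are e-close to y0, y1, z0
  with positive probability.  For n large this is implied by: Z near z0, Y_0 near y1,
  Y_1, ..., Y_n near y0, and the tail sum_k eta (1-eta)^k |Y_(n+1+k)| at most E|Y_0| + 1.
  By independence the probability of this event factorises; the head factor is positive since
  all the points lie in the supports, the tail factor by Markov's inequality, as the tail has
  expectation E|Y_0|.
*)
theory Submission
  imports Defs
begin

lemma norm_step_towards_gt:
  fixes c y z :: "'a::real_inner"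
  assumes "0 < e" "inner (z - c) (y - c) < 0"
  shows "norm (c - z) < norm ((1 - e) *\<^sub>R c + e *\<^sub>R y - z)"
proof -
  have "(norm ((1 - e) *\<^sub>R c + e *\<^sub>R y - z))\<^sup>2
      = (norm (c - z))\<^sup>2 - 2 * e * inner (z - c) (y - c) + e\<^sup>2 * inner (y - c) (y - c)"
    unfolding power2_norm_eq_inner
    by (simp add: inner_add_left inner_add_right inner_diff_left inner_diff_right inner_commute
        algebra_simps power2_eq_square)
  moreover have "0 < - 2 * e * inner (z - c) (y - c)"
    using assms by (simp add: mult_pos_neg)
  moreover have "0 \<le> e\<^sup>2 * inner (y - c) (y - c)"
    by simp
  ultimately have "(norm (c - z))\<^sup>2 < (norm ((1 - e) *\<^sub>R c + e *\<^sub>R y - z))\<^sup>2"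
    by linarith
  then show ?thesis
    by (rule power_less_imp_less_base) simp
qed

lemma dist_triple_le:
  fixes a b :: "'a::metric_space \<times> 'b::metric_space \<times> 'c::metric_space"
  shows "dist a b \<le> dist (fst a) (fst b) + dist (fst (snd a)) (fst (snd b)) + dist (snd (snd a)) (snd (snd b))"
  by (smt (verit) dist_fst_le dist_snd_le dist_Pair_Pair sqrt_sum_squares_le_sum_abs prod.collapse zero_le_dist)

lemma obtuse_angle_stable:
  fixes c0 y0 z0 :: "'a::real_inner"
  assumes "inner (z0 - c0) (y0 - c0) < 0"
  obtains e where "0 < e"
    "\<And>c y z. dist c c0 < e \<Longrightarrow> dist y y0 < e \<Longrightarrow> dist z z0 < e \<Longrightarrow> inner (z - c) (y - c) < 0"
proof -
  define f where "f = (\<lambda>p :: 'a \<times> 'a \<times> 'a. inner (snd (snd p) - fst p) (fst (snd p) - fst p))"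
  have "continuous (at (c0, y0, z0)) f"
    unfolding f_def by (intro continuous_intros)
  moreover have "0 < - f (c0, y0, z0)"
    using assms by (simp add: f_def)
  ultimately obtain d where "0 < d"
    and d: "\<And>p. dist p (c0, y0, z0) < d \<Longrightarrow> dist (f p) (f (c0, y0, z0)) < - f (c0, y0, z0)"
    unfolding continuous_at_eps_delta by blast
  show ?thesis
  proof
    show "0 < d / 3" using \<open>0 < d\<close> by simp
    fix c y z assume "dist c c0 < d / 3" "dist y y0 < d / 3" "dist z z0 < d / 3"
    then have "dist (c, y, z) (c0, y0, z0) < d"
      using dist_triple_le[of "(c, y, z)" "(c0, y0, z0)"] by simp
    then show "inner (z - c) (y - c) < 0"
      using d[of "(c, y, z)"] by (simp add: f_def dist_real_def)
  qed
qed

lemma obtuse_point_near: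
  fixes y0 z0 :: "'a::real_inner"
  assumes "z0 \<noteq> y0" "0 < d"
  obtains y1 where "dist y0 y1 < d" "inner (z0 - y0) (y1 - y0) < 0"
proof
  define t where "t = d / (2 * dist y0 z0)"
  have "0 < t"
    using assms by (simp add: t_def)
  show "dist y0 (y0 + t *\<^sub>R (y0 - z0)) < d"
    using assms by (simp add: t_def dist_norm)
  have "inner (z0 - y0) (y0 + t *\<^sub>R (y0 - z0) - y0) = - (t * inner (y0 - z0) (y0 - z0))"
    by (metis add_diff_cancel_left' inner_minus_left inner_scaleR_right minus_diff_eq)
  also have "\<dots> < 0"
    using assms \<open>0 < t\<close> by simp
  finally show "inner (z0 - y0) (y0 + t *\<^sub>R (y0 - z0) - y0) < 0" .
qed

lemma summable_of_ennreal_suminf_le: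
  assumes "\<And>k. 0 \<le> f k" "0 \<le> M" "(\<Sum>k. ennreal (f k)) \<le> ennreal M"
  shows "summable f" "suminf f \<le> M"
proof -
  show "summable f"
    using assms by (intro summable_suminf_not_top) (auto simp: top_unique)
  then have "ennreal (suminf f) \<le> ennreal M"
    using assms by (simp add: suminf_ennreal2)
  then show "suminf f \<le> M"
    using \<open>0 \<le> M\<close> by simp
qed

lemma geometric_tail_bound:
  fixes y :: "nat \<Rightarrow> 'a::banach"
  assumes eta: "0 < \<eta>" "\<eta> < 1" and "0 \<le> M"
    and tail: "(\<Sum>k. ennreal (\<eta> * (1 - \<eta>) ^ k * norm (y (n + k)))) \<le> ennreal M"
  shows "summable (\<lambda>k. \<eta> * (1 - \<eta>) ^ k * norm (y k))"
    and "norm (\<Sum>k. (\<eta> * (1 - \<eta>) ^ (k + n)) *\<^sub>R y (k + n)) \<le> (1 - \<eta>) ^ n * M"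
proof -
  define w where "w k = \<eta> * (1 - \<eta>) ^ k" for k
  have w_nonneg: "0 \<le> w k" for k
    using eta by (simp add: w_def)
  have tail_summable: "summable (\<lambda>k. w k * norm (y (n + k)))"
    and tail_le: "(\<Sum>k. w k * norm (y (n + k))) \<le> M"
    using summable_of_ennreal_suminf_le[OF _ \<open>0 \<le> M\<close> tail] w_nonneg by (simp_all add: w_def)
  have "norm (w (k + n) *\<^sub>R y (k + n)) = (1 - \<eta>) ^ n * (w k * norm (y (n + k)))" for k
    using w_nonneg[of "k + n"] by (simp add: w_def power_add add.commute mult_ac)
  then have shifted: "(\<lambda>k. norm (w (k + n) *\<^sub>R y (k + n))) = (\<lambda>k. (1 - \<eta>) ^ n * (w k * norm (y (n + k))))"
    by simp
  have summable_shifted: "summable (\<lambda>k. norm (w (k + n) *\<^sub>R y (k + n)))"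
    unfolding shifted by (rule summable_mult[OF tail_summable])
  then show "summable (\<lambda>k. \<eta> * (1 - \<eta>) ^ k * norm (y k))"
    using summable_iff_shift[of "\<lambda>k. \<eta> * (1 - \<eta>) ^ k * norm (y k)" n] w_nonneg
    by (simp add: w_def)
  have "norm (\<Sum>k. w (k + n) *\<^sub>R y (k + n)) \<le> (\<Sum>k. norm (w (k + n) *\<^sub>R y (k + n)))"
    using summable_shifted by (rule summable_norm)
  also have "\<dots> = (1 - \<eta>) ^ n * (\<Sum>k. w k * norm (y (n + k)))"
    unfolding shifted using tail_summable by (rule suminf_mult)
  also have "\<dots> \<le> (1 - \<eta>) ^ n * M"
    using tail_le eta by (simp add: mult_left_mono)
  finally show "norm (\<Sum>k. (\<eta> * (1 - \<eta>) ^ (k + n)) *\<^sub>R y (k + n)) \<le> (1 - \<eta>) ^ n * M"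
    by (simp add: w_def)
qed

lemma geometric_head_bound:
  fixes y :: "nat \<Rightarrow> 'a::real_normed_vector"
  assumes eta: "0 < \<eta>" "\<eta> < 1" and "0 \<le> r"
    and head: "\<And>k. k < n \<Longrightarrow> dist (y k) p \<le> r"
  shows "norm ((\<Sum>k<n. (\<eta> * (1 - \<eta>) ^ k) *\<^sub>R y k) - p) \<le> r + (1 - \<eta>) ^ n * norm p"
proof -
  define w where "w k = \<eta> * (1 - \<eta>) ^ k" for k
  have w_nonneg: "0 \<le> w k" for k
    using eta by (simp add: w_def)
  have weights: "(\<Sum>k<n. w k) = 1 - (1 - \<eta>) ^ n"
    using eta by (simp add: w_def sum_distrib_left[symmetric] sum_gp_strict)
  have "(\<Sum>k<n. w k *\<^sub>R p) = (1 - (1 - \<eta>) ^ n) *\<^sub>R p"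
    by (simp only: scaleR_sum_left[symmetric] weights)
  then have "(\<Sum>k<n. w k *\<^sub>R y k) - p = (\<Sum>k<n. w k *\<^sub>R (y k - p)) - (1 - \<eta>) ^ n *\<^sub>R p"
    by (simp add: scaleR_diff_right sum_subtractf algebra_simps)
  moreover have "norm (\<Sum>k<n. w k *\<^sub>R (y k - p)) \<le> (\<Sum>k<n. w k * r)"
    using head w_nonneg
    by (intro order.trans[OF norm_sum] sum_mono) (simp add: dist_norm mult_left_mono)
  moreover have "(\<Sum>k<n. w k * r) = r - (1 - \<eta>) ^ n * r"
    by (simp only: sum_distrib_right[symmetric] weights) (simp add: algebra_simps)
  moreover have "0 \<le> (1 - \<eta>) ^ n * r"
    using \<open>0 \<le> r\<close> eta by simp
  ultimately show ?thesis
    using norm_triangle_ineq4[of "\<Sum>k<n. w k *\<^sub>R (y k - p)" "(1 - \<eta>) ^ n *\<^sub>R p"] eta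
    by (simp add: w_def)
qed

lemma geometric_average_near:
  fixes y :: "nat \<Rightarrow> 'a::banach"
  assumes eta: "0 < \<eta>" "\<eta> < 1" and "0 \<le> r" "0 \<le> M"
    and head: "\<And>k. k < n \<Longrightarrow> dist (y k) p \<le> r"
    and tail: "(\<Sum>k. ennreal (\<eta> * (1 - \<eta>) ^ k * norm (y (n + k)))) \<le> ennreal M"
  shows "summable (\<lambda>k. \<eta> * (1 - \<eta>) ^ k * norm (y k))"
    and "dist (\<Sum>k. (\<eta> * (1 - \<eta>) ^ k) *\<^sub>R y k) p \<le> r + (1 - \<eta>) ^ n * (M + norm p)"
proof -
  let ?a = "\<lambda>k. (\<eta> * (1 - \<eta>) ^ k) *\<^sub>R y k"
  show "summable (\<lambda>k. \<eta> * (1 - \<eta>) ^ k * norm (y k))"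
    using geometric_tail_bound(1)[OF eta \<open>0 \<le> M\<close> tail] .
  then have "summable ?a"
    using eta by (intro summable_norm_cancel[of ?a]) simp
  then have "dist (\<Sum>k. ?a k) p = norm ((\<Sum>k. ?a (k + n)) + ((\<Sum>k<n. ?a k) - p))"
    unfolding dist_norm by (subst suminf_split_initial_segment[of _ n]) (simp_all add: add_diff_eq)
  also have "\<dots> \<le> (1 - \<eta>) ^ n * M + (r + (1 - \<eta>) ^ n * norm p)"
    using norm_triangle_ineq geometric_tail_bound(2)[OF eta \<open>0 \<le> M\<close> tail]
      geometric_head_bound[OF eta \<open>0 \<le> r\<close> head]
    by (rule order.trans[OF _ add_mono])
  finally show "dist (\<Sum>k. ?a k) p \<le> r + (1 - \<eta>) ^ n * (M + norm p)"
    by (simp add: distrib_left)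
qed

lemma non_degenerate_ball_in_support:
  assumes "non_degenerate M X"
  obtains x r where "0 < r" "ball x r \<subseteq> measure_support (distr M borel X)"
proof -
  obtain x where "x \<in> interior (measure_support (distr M borel X))"
    using assms unfolding non_degenerate_def by blast
  then show ?thesis
    using that by (meson interior_subset open_contains_ball_eq open_interior subset_trans)
qed

lemma non_degenerate_support_avoids:
  fixes X :: "'b \<Rightarrow> 'a::{metric_space, perfect_space}"
  assumes "non_degenerate M X"
  obtains z where "z \<in> measure_support (distr M borel X)" "z \<noteq> y"
proof -
  have "interior (measure_support (distr M borel X)) \<noteq> {y}"
    using not_open_singleton[of y] by (metis open_interior)
  with assms show ?thesis
    using that interior_subset unfolding non_degenerate_def by blast
qed

lemma (in prob_space) prob_open_pos_of_support:
  assumes "X \<in> borel_measurable M" "x \<in> measure_support (distr M borel X)" "open U" "x \<in> U"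
  shows "0 < prob (X -` U \<inter> space M)"
  using assms by (auto simp: measure_support_def emeasure_distr emeasure_eq_measure)

lemma (in prob_space) prob_all_in_open_pos:
  assumes indep: "indep_vars (\<lambda>_. borel) X I" and "finite J" "J \<subseteq> I"
    and "\<And>i. i \<in> J \<Longrightarrow> open (U i)"
    and "\<And>i. i \<in> J \<Longrightarrow> p i \<in> U i \<inter> measure_support (distr M borel (X i))"
  shows "0 < prob {\<omega> \<in> space M. \<forall>i\<in>J. X i \<omega> \<in> U i}"
proof (cases "J = {}")
  case True
  then show ?thesis by (simp add: prob_space)
next
  case False
  have meas: "X i \<in> borel_measurable M" if "i \<in> J" for i
    using indep \<open>J \<subseteq> I\<close> that unfolding indep_vars_def by auto
  have "{\<omega> \<in> space M. \<forall>i\<in>J. X i \<omega> \<in> U i} = (\<Inter>i\<in>J. X i -` U i \<inter> space M)"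
    using False by auto
  also have "prob \<dots> = (\<Prod>i\<in>J. prob (X i -` U i \<inter> space M))"
    using assms False by (intro indep_varsD) auto
  also have "\<dots> > 0"
    using assms meas by (intro prod_pos prob_open_pos_of_support) auto
  finally show ?thesis .
qed

lemma (in prob_space) prob_restrict_indep:
  assumes "indep_vars M' X I" "J \<inter> K = {}" "J \<subseteq> I" "K \<subseteq> I"
    and "A \<in> sets (PiM J M')" "B \<in> sets (PiM K M')"
  shows "prob {\<omega> \<in> space M. restrict (\<lambda>i. X i \<omega>) J \<in> A \<and> restrict (\<lambda>i. X i \<omega>) K \<in> B}
       = prob {\<omega> \<in> space M. restrict (\<lambda>i. X i \<omega>) J \<in> A}
         * prob {\<omega> \<in> space M. restrict (\<lambda>i. X i \<omega>) K \<in> B}"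
  using indep_varD[OF indep_var_restrict[OF assms(1-4)] assms(5,6)]
  by (simp add: vimage_def Int_def conj_commute)

lemma (in prob_space) prob_le_pos_of_nn_integral_less:
  assumes [measurable]: "T \<in> borel_measurable M" and "(\<integral>\<^sup>+\<omega>. T \<omega> \<partial>M) < c"
  shows "0 < prob {\<omega> \<in> space M. T \<omega> \<le> c}"
proof (rule ccontr)
  let ?S = "{\<omega> \<in> space M. T \<omega> \<le> c}"
  assume "\<not> 0 < prob ?S"
  then have "prob ?S = 0"
    using measure_nonneg[of M ?S] by linarith
  then have "?S \<in> null_sets M"
    by (simp add: null_sets_def emeasure_eq_measure)
  then have "AE \<omega> in M. c \<le> T \<omega>"
    by (rule AE_I') auto
  then have "(\<integral>\<^sup>+\<omega>. c \<partial>M) \<le> (\<integral>\<^sup>+\<omega>. T \<omega> \<partial>M)"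
    by (rule nn_integral_mono_AE)
  with assms(2) show False
    by (simp add: emeasure_space_1)
qed

lemma nn_integral_geometric_weighted_sum:
  fixes X :: "nat \<Rightarrow> 'b \<Rightarrow> real"
  assumes eta: "0 < \<eta>" "\<eta> < 1" and [measurable]: "\<And>k. X k \<in> borel_measurable M"
    and moment: "\<And>k. (\<integral>\<^sup>+\<omega>. X k \<omega> \<partial>M) = ennreal c" and "0 \<le> c"
  shows "(\<integral>\<^sup>+\<omega>. (\<Sum>k. ennreal (\<eta> * (1 - \<eta>) ^ k * X k \<omega>)) \<partial>M) = ennreal c"
proof -
  define w where "w k = \<eta> * (1 - \<eta>) ^ k" for k
  have w_nonneg: "0 \<le> w k" for k
    using eta by (simp add: w_def)
  have "(\<integral>\<^sup>+\<omega>. (\<Sum>k. ennreal (w k * X k \<omega>)) \<partial>M) = (\<Sum>k. \<integral>\<^sup>+\<omega>. ennreal (w k * X k \<omega>) \<partial>M)"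
    by (rule nn_integral_suminf) measurable
  also have "\<dots> = (\<Sum>k. ennreal (w k * c))"
    using w_nonneg \<open>0 \<le> c\<close> by (simp add: ennreal_mult' nn_integral_cmult moment ennreal_mult)
  also have "\<dots> = ennreal (\<Sum>k. w k * c)"
    using w_nonneg eta \<open>0 \<le> c\<close> by (intro suminf_ennreal2) (auto simp: w_def intro!: summable_mult summable_mult2)
  also have "(\<Sum>k. w k * c) = c"
    using eta by (simp add: w_def suminf_mult2[symmetric] suminf_mult suminf_geometric)
  finally show ?thesis
    by (simp add: w_def)
qed

lemma (in prob_space) nn_integral_norm_eq_if_same_distr:
  fixes X X' :: "'a \<Rightarrow> 'c::real_normed_vector"
  assumes [measurable]: "X \<in> borel_measurable M" "X' \<in> borel_measurable M"
    and "distr M borel X = distr M borel X'" and "integrable M (\<lambda>\<omega>. norm (X' \<omega>))"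
  shows "(\<integral>\<^sup>+\<omega>. norm (X \<omega>) \<partial>M) = ennreal (expectation (\<lambda>\<omega>. norm (X' \<omega>)))"
proof -
  have "(\<integral>\<^sup>+\<omega>. norm (X \<omega>) \<partial>M) = (\<integral>\<^sup>+x. norm x \<partial>distr M borel X)"
    by (simp add: nn_integral_distr)
  also have "\<dots> = (\<integral>\<^sup>+\<omega>. norm (X' \<omega>) \<partial>M)"
    using assms(3) by (simp add: nn_integral_distr)
  also have "\<dots> = ennreal (expectation (\<lambda>\<omega>. norm (X' \<omega>)))"
    using assms(4) by (simp add: nn_integral_eq_integral)
  finally show ?thesis .
qed

lemma (in prob_space) prob_geometric_tail_le_pos:
  fixes Y :: "nat \<Rightarrow> 'a \<Rightarrow> 'c::real_normed_vector"
  assumes eta: "0 < \<eta>" "\<eta> < 1" and [measurable]: "\<And>k. Y k \<in> borel_measurable M"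
    and Y_ident: "\<And>k. distr M borel (Y k) = distr M borel (Y 0)"
    and Y_int: "integrable M (\<lambda>\<omega>. norm (Y 0 \<omega>))"
    and bound: "expectation (\<lambda>\<omega>. norm (Y 0 \<omega>)) < B"
  shows "0 < prob {\<omega> \<in> space M. (\<Sum>k. ennreal (\<eta> * (1 - \<eta>) ^ k * norm (Y (m + k) \<omega>))) \<le> ennreal B}"
proof (rule prob_le_pos_of_nn_integral_less)
  have "(\<integral>\<^sup>+\<omega>. norm (Y (m + k) \<omega>) \<partial>M) = ennreal (expectation (\<lambda>\<omega>. norm (Y 0 \<omega>)))" for k
    using Y_ident Y_int by (intro nn_integral_norm_eq_if_same_distr) auto
  then have mean: "(\<integral>\<^sup>+\<omega>. (\<Sum>k. ennreal (\<eta> * (1 - \<eta>) ^ k * norm (Y (m + k) \<omega>))) \<partial>M)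
      = ennreal (expectation (\<lambda>\<omega>. norm (Y 0 \<omega>)))"
    using eta by (intro nn_integral_geometric_weighted_sum) auto
  have "0 \<le> expectation (\<lambda>\<omega>. norm (Y 0 \<omega>))"
    by simp
  then have "0 < B"
    using bound by linarith
  then show "(\<integral>\<^sup>+\<omega>. (\<Sum>k. ennreal (\<eta> * (1 - \<eta>) ^ k * norm (Y (m + k) \<omega>))) \<partial>M) < ennreal B"
    unfolding mean using bound by (rule ennreal_lessI)
qed measurable

lemma (in prob_space) prob_near_support_and_tail_bounded_pos:
  fixes Y :: "nat \<Rightarrow> 'a \<Rightarrow> 'c::real_normed_vector" and Z :: "'a \<Rightarrow> 'c"
  assumes indep: "indep_vars (\<lambda>_. borel) (\<lambda>i. case i of None \<Rightarrow> Z | Some k \<Rightarrow> Y k) UNIV"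
    and eta: "0 < \<eta>" "\<eta> < 1"
    and Y_ident: "\<And>k. distr M borel (Y k) = distr M borel (Y 0)"
    and Y_int: "integrable M (\<lambda>\<omega>. norm (Y 0 \<omega>))"
    and supp: "z0 \<in> measure_support (distr M borel Z)"
      "\<And>k. k \<le> n \<Longrightarrow> p k \<in> measure_support (distr M borel (Y k))"
    and "0 < r" and bound: "expectation (\<lambda>\<omega>. norm (Y 0 \<omega>)) < B"
  shows "0 < prob {\<omega> \<in> space M. (dist (Z \<omega>) z0 < r \<and> (\<forall>k\<le>n. dist (Y k \<omega>) (p k) < r))
           \<and> (\<Sum>k. ennreal (\<eta> * (1 - \<eta>) ^ k * norm (Y (Suc (n + k)) \<omega>))) \<le> ennreal B}"
    (is "0 < prob {\<omega> \<in> space M. ?head \<omega> \<and> ?tail \<omega>}")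
proof -
  define X where "X = (\<lambda>i. case i of None \<Rightarrow> Z | Some k \<Rightarrow> Y k)"
  define J where "J = insert None (Some ` {..n})"
  define K where "K = Some ` {n<..}"
  define U where "U = (\<lambda>i. ball (case i of None \<Rightarrow> z0 | Some k \<Rightarrow> p k) r)"
  define tail where "tail f = (\<Sum>k. ennreal (\<eta> * (1 - \<eta>) ^ k * norm (f (Some (Suc (n + k))))))"
    for f :: "nat option \<Rightarrow> 'c"
  have X_indep: "indep_vars (\<lambda>_. borel) X UNIV"
    using indep by (simp add: X_def)
  have meas[measurable]: "Y k \<in> borel_measurable M" "Z \<in> borel_measurable M" for k
    using X_indep unfolding indep_vars_def X_def by (metis UNIV_I option.simps(4,5))+
  have "\<And>k. Some (Suc (n + k)) \<in> K"
    by (simp add: K_def)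
  then have [measurable]: "tail \<in> borel_measurable (PiM K (\<lambda>_. borel))"
    unfolding tail_def by measurable
  have head_set: "PiE J U \<in> sets (PiM J (\<lambda>_. borel))"
    by (rule sets_PiM_I_finite) (auto simp: J_def U_def)
  have tail_set: "{f \<in> space (PiM K (\<lambda>_. borel)). tail f \<le> ennreal B} \<in> sets (PiM K (\<lambda>_. borel))"
    by measurable
  have head_iff: "(\<forall>i\<in>J. X i \<omega> \<in> U i) \<longleftrightarrow> ?head \<omega>" for \<omega>
    by (auto simp: J_def U_def X_def dist_commute)
  have head_restrict_iff: "restrict (\<lambda>i. X i \<omega>) J \<in> PiE J U \<longleftrightarrow> ?head \<omega>" for \<omega>
    by (simp add: restrict_PiE_iff Pi_iff head_iff)
  have tail_restrict_iff:
    "restrict (\<lambda>i. X i \<omega>) K \<in> {f \<in> space (PiM K (\<lambda>_. borel)). tail f \<le> ennreal B} \<longleftrightarrow> ?tail \<omega>" for \<omega>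
    by (simp add: space_PiM K_def tail_def X_def)
  have "0 < prob {\<omega> \<in> space M. \<forall>i\<in>J. X i \<omega> \<in> U i}"
  proof (rule prob_all_in_open_pos[OF X_indep])
    show "(case i of None \<Rightarrow> z0 | Some k \<Rightarrow> p k) \<in> U i \<inter> measure_support (distr M borel (X i))"
      if "i \<in> J" for i
      using that supp \<open>0 < r\<close> by (auto simp: J_def U_def X_def)
  qed (auto simp: J_def U_def)
  moreover have "0 < prob {\<omega> \<in> space M. ?tail \<omega>}"
    using prob_geometric_tail_le_pos[where Y = Y and m = "Suc n", OF eta meas(1) Y_ident Y_int bound] by simp
  moreover have "prob {\<omega> \<in> space M. ?head \<omega> \<and> ?tail \<omega>}
      = prob {\<omega> \<in> space M. \<forall>i\<in>J. X i \<omega> \<in> U i} * prob {\<omega> \<in> space M. ?tail \<omega>}"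
  proof -
    have "J \<inter> K = {}"
      by (auto simp: J_def K_def)
    from prob_restrict_indep[OF X_indep this _ _ head_set tail_set] show ?thesis
      by (simp only: head_restrict_iff tail_restrict_iff head_iff) simp
  qed
  ultimately show ?thesis
    by simp
qed

lemma (in prob_space) prob_near_support_points_pos:
  fixes Y :: "nat \<Rightarrow> 'a \<Rightarrow> 'c::{banach, second_countable_topology}" and Z chi :: "'a \<Rightarrow> 'c"
  assumes indep: "indep_vars (\<lambda>_. borel) (\<lambda>i. case i of None \<Rightarrow> Z | Some k \<Rightarrow> Y k) UNIV"
    and eta: "0 < \<eta>" "\<eta> < 1"
    and [measurable]: "\<And>k. Y k \<in> borel_measurable M" "Z \<in> borel_measurable M" "chi \<in> borel_measurable M"
    and Y_ident: "\<And>k. distr M borel (Y k) = distr M borel (Y 0)"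
    and Y_int: "integrable M (\<lambda>\<omega>. norm (Y 0 \<omega>))"
    and chi_def: "\<And>\<omega>. \<omega> \<in> space M \<Longrightarrow>
        summable (\<lambda>k. \<eta> * (1 - \<eta>) ^ k * norm (Y (Suc k) \<omega>)) \<Longrightarrow>
        chi \<omega> = (\<Sum>k. (\<eta> * (1 - \<eta>) ^ k) *\<^sub>R Y (Suc k) \<omega>)"
    and supp: "y0 \<in> measure_support (distr M borel (Y 0))" "y1 \<in> measure_support (distr M borel (Y 0))"
      "z0 \<in> measure_support (distr M borel Z)"
    and "0 < e"
  shows "0 < prob {\<omega> \<in> space M. dist (chi \<omega>) y0 < e \<and> dist (Y 0 \<omega>) y1 < e \<and> dist (Z \<omega>) z0 < e}"
    (is "0 < prob ?T")
proof -
  define B where "B = expectation (\<lambda>\<omega>. norm (Y 0 \<omega>)) + 1"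
  have "0 \<le> B"
    by (simp add: B_def add_nonneg_nonneg)
  \<comment> \<open>\<open>(1 - \<eta>) ^ n\<close> is both the weight of the tail of chi and the weight missing from its head\<close>
  have "(\<lambda>n. (1 - \<eta>) ^ n * (B + norm y0)) \<longlonglongrightarrow> 0"
    using eta by (intro tendsto_mult_left_zero LIMSEQ_power_zero) simp
  then have "eventually (\<lambda>n. (1 - \<eta>) ^ n * (B + norm y0) < e / 2) sequentially"
    using \<open>0 < e\<close> by (intro order_tendstoD(2)) auto
  then obtain n where n: "(1 - \<eta>) ^ n * (B + norm y0) < e / 2"
    by (auto simp: eventually_sequentially)
  define p where "p k = (if k = 0 then y1 else y0)" for k :: nat
  let ?E = "{\<omega> \<in> space M. (dist (Z \<omega>) z0 < e / 2 \<and> (\<forall>k\<le>n. dist (Y k \<omega>) (p k) < e / 2))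
           \<and> (\<Sum>k. ennreal (\<eta> * (1 - \<eta>) ^ k * norm (Y (Suc (n + k)) \<omega>))) \<le> ennreal B}"
  have "0 < prob ?E"
  proof (rule prob_near_support_and_tail_bounded_pos[OF indep eta Y_ident Y_int supp(3)])
    show "p k \<in> measure_support (distr M borel (Y k))" for k
      using supp Y_ident[of k] by (simp add: p_def)
  qed (use \<open>0 < e\<close> in \<open>simp_all add: B_def\<close>)
  moreover have "?E \<subseteq> ?T"
  proof safe
    fix \<omega> assume "\<omega> \<in> space M" and head: "dist (Z \<omega>) z0 < e / 2" "\<forall>k\<le>n. dist (Y k \<omega>) (p k) < e / 2"
      and tail: "(\<Sum>k. ennreal (\<eta> * (1 - \<eta>) ^ k * norm (Y (Suc (n + k)) \<omega>))) \<le> ennreal B"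
    have "0 \<le> e / 2"
      using \<open>0 < e\<close> by simp
    moreover have "dist (Y (Suc k) \<omega>) y0 \<le> e / 2" if "k < n" for k
      using head(2) that by (auto simp: p_def dest!: spec[of _ "Suc k"])
    ultimately have "summable (\<lambda>k. \<eta> * (1 - \<eta>) ^ k * norm (Y (Suc k) \<omega>))"
      and "dist (\<Sum>k. (\<eta> * (1 - \<eta>) ^ k) *\<^sub>R Y (Suc k) \<omega>) y0 \<le> e / 2 + (1 - \<eta>) ^ n * (B + norm y0)"
      using geometric_average_near[OF eta _ \<open>0 \<le> B\<close> _ tail] by blast+
    with chi_def[OF \<open>\<omega> \<in> space M\<close>] n show "dist (chi \<omega>) y0 < e"
      by simp
    show "dist (Y 0 \<omega>) y1 < e" "dist (Z \<omega>) z0 < e"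
      using head \<open>0 < e\<close> by (auto simp: p_def dest!: spec[of _ 0])
  qed
  moreover have "?T \<in> events"
    by measurable
  ultimately show ?thesis
    by (meson finite_measure_mono order.strict_trans2)
qed

theorem proposition6p14:
  fixes M :: "'b measure"
    and Y :: "nat \<Rightarrow> 'b \<Rightarrow> 'a::euclidean_space"
    and Z :: "'b \<Rightarrow> 'a"
    and chi :: "'b \<Rightarrow> 'a"
    and \<eta> :: real
  assumes "prob_space M"
    and eta: "0 < \<eta>" "\<eta> < 1"
    and Y_meas: "\<And>k. Y k \<in> borel_measurable M"
    and Y_indep: "prob_space.indep_vars M (\<lambda>_. borel) Y UNIV"
    and Y_ident: "\<And>k. distr M borel (Y k) = distr M borel (Y 0)"
    and Y_nondeg: "\<And>k. non_degenerate M (Y k)"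
    and Y_int: "integrable M (\<lambda>\<omega>. norm (Y 0 \<omega>))"
    and Z_meas: "Z \<in> borel_measurable M"
    and Z_nondeg: "non_degenerate M Z"
    and YZ_indep: "prob_space.indep_vars M (\<lambda>_. borel)
        (\<lambda>i. case i of None \<Rightarrow> Z | Some k \<Rightarrow> Y k) (UNIV :: nat option set)"
    and chi_meas: "chi \<in> borel_measurable M"
    and chi_def: "\<And>\<omega>. \<omega> \<in> space M \<Longrightarrow>
        summable (\<lambda>k. \<eta> * (1 - \<eta>) ^ k * norm (Y (Suc k) \<omega>)) \<Longrightarrow>
        chi \<omega> = (\<Sum>k. (\<eta> * (1 - \<eta>) ^ k) *\<^sub>R Y (Suc k) \<omega>)"
  shows "measure M {\<omega> \<in> space M.
           norm ((1 - \<eta>) *\<^sub>R chi \<omega> + \<eta> *\<^sub>R Y 0 \<omega> - Z \<omega>) > norm (chi \<omega> - Z \<omega>)} > 0"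
proof -
  interpret prob_space M by fact
  obtain y0 d where "0 < d" and y0_ball: "ball y0 d \<subseteq> measure_support (distr M borel (Y 0))"
    using non_degenerate_ball_in_support[OF Y_nondeg] by blast
  obtain z0 where z0: "z0 \<in> measure_support (distr M borel Z)" "z0 \<noteq> y0"
    using non_degenerate_support_avoids[OF Z_nondeg] by blast
  obtain y1 where "dist y0 y1 < d" and "inner (z0 - y0) (y1 - y0) < 0"
    using obtuse_point_near[OF z0(2) \<open>0 < d\<close>] by blast
  then obtain e where "0 < e" and obtuse:
    "\<And>c y z. dist c y0 < e \<Longrightarrow> dist y y1 < e \<Longrightarrow> dist z z0 < e \<Longrightarrow> inner (z - c) (y - c) < 0"
    using obtuse_angle_stable by blast
  let ?E = "{\<omega> \<in> space M. dist (chi \<omega>) y0 < e \<and> dist (Y 0 \<omega>) y1 < e \<and> dist (Z \<omega>) z0 < e}"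
  let ?S = "{\<omega> \<in> space M. norm ((1 - \<eta>) *\<^sub>R chi \<omega> + \<eta> *\<^sub>R Y 0 \<omega> - Z \<omega>) > norm (chi \<omega> - Z \<omega>)}"
  have "0 < prob ?E"
    using \<open>0 < d\<close> \<open>dist y0 y1 < d\<close> y0_ball z0(1) \<open>0 < e\<close>
    by (intro prob_near_support_points_pos[OF YZ_indep eta Y_meas Z_meas chi_meas Y_ident Y_int chi_def]) auto
  moreover have "?E \<subseteq> ?S"
    by (auto intro!: norm_step_towards_gt[OF eta(1)] obtuse)
  moreover have "?S \<in> events"
    using Y_meas Z_meas chi_meas by measurable
  ultimately show ?thesis
    by (meson finite_measure_mono order.strict_trans2)
qed

end
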